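(* For every $n\ge 3$ and every $\eta>0$ there exist a $1$-dimensional Euclidean graph $G$ on $n$ vertices and a range assignment $r$ such that $SDG(G,r)$ is connected and the weight-coefficient of $SDG(G,r)$ with respect to $G$ is at least $n-2-\eta$. Concretely, take points $s,u_1,\dots,u_{n-2},t$ on the real line at coordinates $0,1,1+\epsilon,\dots,1+(n-3)\epsilon, W+1$, let $G$ have edge set $\{(s,u_i)\}\cup\{(u_i,t)\}$ for $i\in[n-2]$ with Euclidean edge weights, and let $r(s)=1$, $r(x)=W$ for all other vertices $x$; for $W$ sufficiently large relative to $n$ and $\epsilon$ sufficiently small relative to $1/n$, this works. Thus the weight-coefficient of connected SDGs of $1$-dimensional Euclidean $n$-vertex graphs can be $\Omega(n)$.
   Context: A $1$-dimensional Euclidean graph is a weighted graph whose vertices are points on a line and whose edges (not necessarily all pairs) have weight equal to the Euclidean distance between their endpoints. For a weighted graph $G=(V,E,w)$ and $r:V\to\mathbb{R}^+$, $SDG(G,r)$ is the spanning subgraph of $G$ containing edge $e=(u,v)\in E$ iff $r(u)\ge w(e)$ and $r(v)\ge w(e)$. The weight-coefficient of a connected spanning subgraph $G'$ of $G$ with respect to $G$ is $w(MST(G'))/w(MST(G))$. *)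

theory Defs
  imports Complex_Main
begin

definition euclid_graph_1d :: "real set \<Rightarrow> real set set \<Rightarrow> bool" where
  "euclid_graph_1d V E \<longleftrightarrow> finite V \<and>
     E \<subseteq> {{a, b} | a b. a \<in> V \<and> b \<in> V \<and> a \<noteq> b}"

definition ewt :: "real set \<Rightarrow> real" where
  "ewt e = (THE d. \<exists>a b. e = {a, b} \<and> d = \<bar>a - b\<bar>)"

definition adj :: "real set set \<Rightarrow> real \<Rightarrow> real \<Rightarrow> bool" where
  "adj E u v \<longleftrightarrow> {u, v} \<in> E"

definition connected_graph :: "real set \<Rightarrow> real set set \<Rightarrow> bool" where
  "connected_graph V F \<longleftrightarrow> (\<forall>u\<in>V. \<forall>v\<in>V. (adj F)\<^sup>*\<^sup>* u v)"

definition spanning_tree :: "real set \<Rightarrow> real set set \<Rightarrow> real set set \<Rightarrow> bool" where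
  "spanning_tree V E T \<longleftrightarrow> T \<subseteq> E \<and> connected_graph V T \<and> card T = card V - 1"

definition mst_weight :: "real set \<Rightarrow> real set set \<Rightarrow> real" where
  "mst_weight V E = Min {(\<Sum>e\<in>T. ewt e) | T. spanning_tree V E T}"

definition sdg :: "real set set \<Rightarrow> (real \<Rightarrow> real) \<Rightarrow> real set set" where
  "sdg E r = {e \<in> E. \<forall>x\<in>e. r x \<ge> ewt e}"

definition weight_coeff :: "real set \<Rightarrow> real set set \<Rightarrow> real set set \<Rightarrow> real" where
  "weight_coeff V E F = mst_weight V F / mst_weight V E"

end

theory Submission
  imports Defs
begin

(*
  For k = n - 2 >= 1 take s = 0, u_i = 1 + i/k (i < k) and t = W + 1, the edges
  {s,u_i} and {u_i,t}, and ranges r(s) = 1, r(x) = W otherwise.  Since every u_i >= 1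
  with equality only for u_0, the SDG keeps exactly the edge {s,u_0} and the k edges
  {u_i,t}.  This SDG has k + 1 = |V| - 1 edges and is connected, hence it is its own
  unique spanning tree; its weight is at least k (W - 1).  The original graph, however,
  contains the spanning tree {u_0,t} + {s,u_i}, of weight at most W + 2k.  So the
  weight-coefficient is at least k (W - 1) / (W + 2k), which exceeds k - eta once
  eta W >= 2k^2 + k.
*)

lemma ewt_pair: "ewt {a, b} = \<bar>a - b\<bar>"
  unfolding ewt_def
  by (rule the_equality) (auto simp: doubleton_eq_iff abs_minus_commute)

lemma adjI: "{u, v} \<in> F \<Longrightarrow> adj F u v"
  by (simp add: adj_def)

lemma reachable_sym:
  assumes "(adj F)\<^sup>*\<^sup>* a b"
  shows "(adj F)\<^sup>*\<^sup>* b a"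
  using assms
proof (induction rule: rtranclp_induct)
  case base
  then show ?case by simp
next
  case (step y z)
  have "adj F z y" using step(2) by (simp add: adj_def insert_commute)
  then show ?case using step(3) by (rule converse_rtranclp_into_rtranclp)
qed

lemma connected_graph_hub:
  assumes "\<forall>v\<in>V. (adj F)\<^sup>*\<^sup>* v c"
  shows "connected_graph V F"
  unfolding connected_graph_def
  using assms reachable_sym rtranclp_trans by metis

lemma finite_tree_weights:
  assumes "finite E"
  shows "finite {(\<Sum>e\<in>T. ewt e) | T. spanning_tree V E T}"
proof -
  have "{(\<Sum>e\<in>T. ewt e) | T. spanning_tree V E T} \<subseteq> (\<lambda>T. \<Sum>e\<in>T. ewt e) ` Pow E"
    by (auto simp: spanning_tree_def)
  then show ?thesis using assms finite_subset by blast
qed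

text \<open>A connected graph with exactly |V| - 1 edges is its own unique spanning tree,
  so its MST weight is its total weight.\<close>
lemma mst_weight_of_tree:
  assumes "finite F" and "connected_graph V F" and "card F = card V - 1"
  shows "mst_weight V F = (\<Sum>e\<in>F. ewt e)"
proof -
  have "spanning_tree V F T \<longleftrightarrow> T = F" for T
  proof
    assume "spanning_tree V F T"
    then have "T \<subseteq> F" and "card T = card F"
      using assms(3) by (simp_all add: spanning_tree_def)
    then show "T = F" using assms(1) card_subset_eq by blast
  qed (use assms in \<open>simp add: spanning_tree_def\<close>)
  then have "{(\<Sum>e\<in>T. ewt e) | T. spanning_tree V F T} = {\<Sum>e\<in>F. ewt e}"
    by simp
  then show ?thesis by (simp add: mst_weight_def)
qed

lemma mst_weight_le:
  assumes "finite E" and "spanning_tree V E T"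
  shows "mst_weight V E \<le> (\<Sum>e\<in>T. ewt e)"
  unfolding mst_weight_def
  using assms finite_tree_weights by (intro Min_le) auto

text \<open>With positive edge weights and at least two vertices, every spanning tree is
  nonempty, so the MST weight (if some spanning tree exists) is positive.\<close>
lemma mst_weight_pos:
  assumes "finite E" and "\<forall>e\<in>E. ewt e > 0" and "card V \<ge> 2"
    and "spanning_tree V E T0"
  shows "mst_weight V E > 0"
proof -
  let ?S = "{(\<Sum>e\<in>T. ewt e) | T. spanning_tree V E T}"
  have "?S \<noteq> {}" using assms(4) by blast
  then have "Min ?S \<in> ?S"
    using finite_tree_weights[OF assms(1)] by (rule Min_in[rotated])
  then obtain T where T: "spanning_tree V E T" and min: "Min ?S = (\<Sum>e\<in>T. ewt e)"
    by blast
  have TE: "T \<subseteq> E" and "card T = card V - 1" using T by (simp_all add: spanning_tree_def)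
  then have "T \<noteq> {}" using assms(3) by auto
  moreover have "finite T" using TE assms(1) by (rule finite_subset)
  ultimately have "(\<Sum>e\<in>T. ewt e) > 0"
    using TE assms(2) by (intro sum_pos) auto
  then show ?thesis unfolding mst_weight_def min .
qed

lemma weight_coeff_lower_bound:
  assumes "finite E" and "\<forall>e\<in>E. ewt e > 0" and "card V \<ge> 2"
    and "F \<subseteq> E" and "connected_graph V F" and "card F = card V - 1"
    and "spanning_tree V E T"
    and "a \<le> (\<Sum>e\<in>F. ewt e)" and "(\<Sum>e\<in>T. ewt e) \<le> b"
  shows "a / b \<le> weight_coeff V E F"
proof -
  have finF: "finite F" using assms(1,4) finite_subset by blast
  have mst_pos: "mst_weight V E > 0" using assms(1-3,7) by (rule mst_weight_pos)
  have mst_le: "mst_weight V E \<le> b" using mst_weight_le[OF assms(1,7)] assms(9) by linarith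
  have F_nonneg: "(\<Sum>e\<in>F. ewt e) \<ge> 0"
    using assms(2,4) by (intro sum_nonneg) (meson less_imp_le subsetD)
  have b_pos: "0 < b" using mst_pos mst_le by linarith
  have "a / b \<le> (\<Sum>e\<in>F. ewt e) / b"
    using assms(8) less_imp_le[OF b_pos] by (rule divide_right_mono)
  also have "\<dots> \<le> (\<Sum>e\<in>F. ewt e) / mst_weight V E"
    using mst_le F_nonneg mult_pos_pos[OF b_pos mst_pos] by (rule divide_left_mono)
  also have "\<dots> = weight_coeff V E F"
    unfolding weight_coeff_def mst_weight_of_tree[OF finF assms(5,6)] ..
  finally show ?thesis .
qed

locale sdg_gadget =
  fixes k :: nat and W :: real
  assumes k_pos: "1 \<le> k" and W_ge: "2 \<le> W"
begin

definition u :: "nat \<Rightarrow> real" where "u i = 1 + real i / real k"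
definition t :: real where "t = W + 1"

definition vertices :: "real set" where
  "vertices = insert 0 (insert t (u ` {..<k}))"

definition left_edges :: "real set set" where "left_edges = (\<lambda>i. {0, u i}) ` {..<k}"
definition right_edges :: "real set set" where "right_edges = (\<lambda>i. {u i, t}) ` {..<k}"
definition edges :: "real set set" where "edges = left_edges \<union> right_edges"

definition ranges :: "real \<Rightarrow> real" where "ranges x = (if x = 0 then 1 else W)"

definition kept :: "real set set" where "kept = insert {0, u 0} right_edges"
definition light_tree :: "real set set" where "light_tree = insert {u 0, t} left_edges"

lemma u_ge_1: "1 \<le> u i"
  by (simp add: u_def)

lemma u_lt_2: "i < k \<Longrightarrow> u i < 2"
  using k_pos by (simp add: u_def divide_less_eq)

lemma u_eq_1_iff: "u i = 1 \<longleftrightarrow> i = 0"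
  using k_pos by (simp add: u_def)

lemma u_inj: "u i = u j \<Longrightarrow> i = j"
  using k_pos by (simp add: u_def)

lemma u_nonzero: "u i \<noteq> 0"
  using u_ge_1[of i] by linarith

lemma t_gt_2: "2 < t"
  using W_ge by (simp add: t_def)

lemma u_ne_t: "i < k \<Longrightarrow> u i \<noteq> t"
  using u_lt_2 t_gt_2 by force

lemma zero_lt_k: "0 < k"
  using k_pos by simp

lemma u_zero: "u 0 = 1"
  by (simp add: u_def)

lemma inj_u: "inj_on u A"
  by (rule inj_onI) (rule u_inj)

lemma card_vertices: "card vertices = k + 2"
proof -
  have "card (u ` {..<k}) = k" using card_image[OF inj_u] by simp
  moreover have "t \<notin> u ` {..<k}" using u_ne_t by (metis imageE lessThan_iff)
  moreover have "0 \<noteq> t" and "0 \<notin> u ` {..<k}" using u_nonzero t_gt_2 by auto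
  ultimately show ?thesis by (simp add: vertices_def)
qed

lemma euclid_graph: "euclid_graph_1d vertices edges"
  unfolding euclid_graph_1d_def
proof (intro conjI subsetI)
  show "finite vertices" by (simp add: vertices_def)
next
  fix e assume "e \<in> edges"
  then consider i where "i < k" "e = {0, u i}" | i where "i < k" "e = {u i, t}"
    by (auto simp: edges_def left_edges_def right_edges_def)
  then show "e \<in> {{a, b} |a b. a \<in> vertices \<and> b \<in> vertices \<and> a \<noteq> b}"
  proof cases
    case 1
    then show ?thesis using u_nonzero[of i] by (auto simp: vertices_def)
  next
    case 2
    then show ?thesis using u_ne_t[of i] by (auto simp: vertices_def)
  qed
qed

lemma ranges_pos: "\<forall>x\<in>vertices. ranges x > 0"
  using W_ge by (simp add: ranges_def)

lemma ewt_left: "ewt {0, u i} = u i"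
  using u_ge_1[of i] by (simp add: ewt_pair)

lemma ewt_right: "i < k \<Longrightarrow> ewt {u i, t} = t - u i"
  using u_lt_2[of i] t_gt_2 by (simp add: ewt_pair)

lemma finite_edges: "finite edges"
  by (simp add: edges_def left_edges_def right_edges_def)

lemma edges_pos: "\<forall>e\<in>edges. ewt e > 0"
  using u_nonzero u_ne_t by (auto simp: edges_def left_edges_def right_edges_def ewt_pair)

text \<open>Only the shortest left edge {0, u 0} fits into the range 1 of s, while every
  right edge has length at most W, the range of both its endpoints, and is kept.\<close>
lemma sdg_edges: "sdg edges ranges = kept"
proof (rule set_eqI)
  fix e
  show "e \<in> sdg edges ranges \<longleftrightarrow> e \<in> kept"
  proof
    assume e: "e \<in> sdg edges ranges"
    show "e \<in> kept"
    proof (cases "e \<in> left_edges")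
      case True
      then obtain i where i: "e = {0, u i}" by (auto simp: left_edges_def)
      then have "u i \<le> 1" using e by (auto simp: sdg_def ewt_left ranges_def)
      then have "i = 0" using u_ge_1[of i] u_eq_1_iff by (meson antisym)
      then show ?thesis using i by (simp add: kept_def)
    next
      case False
      then show ?thesis using e by (auto simp: sdg_def edges_def kept_def)
    qed
  next
    assume e: "e \<in> kept"
    show "e \<in> sdg edges ranges"
    proof (cases "e = {0, u 0}")
      case True
      have "ewt e = 1" using True u_zero ewt_left[of 0] by simp
      then show ?thesis using True zero_lt_k u_nonzero W_ge
        by (auto simp: sdg_def edges_def left_edges_def ranges_def)
    next
      case False
      then obtain i where i: "i < k" "e = {u i, t}" using e by (auto simp: kept_def right_edges_def)
      then show ?thesis using ewt_right[OF i(1)] u_ge_1[of i] u_nonzero t_gt_2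
        by (auto simp: sdg_def edges_def right_edges_def ranges_def t_def)
    qed
  qed
qed

lemma kept_subset: "kept \<subseteq> edges"
  using zero_lt_k by (auto simp: kept_def edges_def left_edges_def)

lemma card_kept: "card kept = card vertices - 1"
proof -
  have "card right_edges = k"
    unfolding right_edges_def
    by (subst card_image) (auto intro!: inj_onI simp: doubleton_eq_iff dest: u_inj u_ne_t)
  moreover have "{0, u 0} \<notin> right_edges"
    using u_nonzero t_gt_2 by (auto simp: right_edges_def doubleton_eq_iff)
  ultimately show ?thesis by (simp add: kept_def right_edges_def card_vertices)
qed

text \<open>The kept edges form a star at t, plus the pendant edge {0, u 0}.\<close>
lemma kept_connected: "connected_graph vertices kept"
proof (rule connected_graph_hub[where c = t], rule ballI)
  fix v assume "v \<in> vertices"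
  then consider "v = 0" | "v = t" | i where "i < k" "v = u i" by (auto simp: vertices_def)
  then show "(adj kept)\<^sup>*\<^sup>* v t"
  proof cases
    case 1
    have "adj kept 0 (u 0)" by (rule adjI) (simp add: kept_def)
    moreover have "adj kept (u 0) t" by (rule adjI) (use zero_lt_k in \<open>auto simp: kept_def right_edges_def\<close>)
    ultimately show ?thesis using 1 by (meson r_into_rtranclp rtranclp.rtrancl_into_rtrancl)
  next
    case 2
    then show ?thesis by simp
  next
    case 3
    have "adj kept (u i) t" by (rule adjI) (use 3 in \<open>auto simp: kept_def right_edges_def\<close>)
    then show ?thesis using 3 by simp
  qed
qed

text \<open>The light tree is a star at s = 0, plus the pendant edge {u 0, t}.\<close>
lemma light_tree_spanning: "spanning_tree vertices edges light_tree"
proof -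
  have conn: "connected_graph vertices light_tree"
  proof (rule connected_graph_hub[where c = 0], rule ballI)
    fix v assume "v \<in> vertices"
    then consider "v = 0" | "v = t" | i where "i < k" "v = u i" by (auto simp: vertices_def)
    then show "(adj light_tree)\<^sup>*\<^sup>* v 0"
    proof cases
      case 1
      then show ?thesis by simp
    next
      case 2
      have "adj light_tree t (u 0)" by (rule adjI) (simp add: light_tree_def insert_commute)
      moreover have "adj light_tree (u 0) 0"
        by (rule adjI) (use zero_lt_k in \<open>auto simp: light_tree_def left_edges_def insert_commute\<close>)
      ultimately show ?thesis using 2 by (meson r_into_rtranclp rtranclp.rtrancl_into_rtrancl)
    next
      case 3
      have "adj light_tree (u i) 0"
        by (rule adjI) (use 3 in \<open>auto simp: light_tree_def left_edges_def insert_commute\<close>)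
      then show ?thesis using 3 by simp
    qed
  qed
  have "card left_edges = k"
    unfolding left_edges_def
    by (subst card_image) (auto intro!: inj_onI simp: doubleton_eq_iff u_nonzero dest: u_inj)
  moreover have "{u 0, t} \<notin> left_edges"
    using t_gt_2 u_nonzero by (auto simp: left_edges_def doubleton_eq_iff)
  ultimately have "card light_tree = card vertices - 1"
    by (simp add: light_tree_def left_edges_def card_vertices)
  moreover have "light_tree \<subseteq> edges"
    using zero_lt_k by (auto simp: light_tree_def edges_def left_edges_def right_edges_def)
  ultimately show ?thesis using conn by (simp add: spanning_tree_def)
qed

text \<open>Each of the k right edges has length t - u i > W - 1.\<close>
lemma kept_weight: "real k * (W - 1) \<le> (\<Sum>e\<in>kept. ewt e)"
proof -
  have inj: "inj_on (\<lambda>i. {u i, t}) {..<k}"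
    by (rule inj_onI) (auto simp: doubleton_eq_iff dest: u_inj u_ne_t)
  have "real k * (W - 1) = (\<Sum>i<k. W - 1)" by simp
  also have "\<dots> \<le> (\<Sum>i<k. ewt {u i, t})"
  proof (rule sum_mono)
    fix i assume "i \<in> {..<k}"
    then show "W - 1 \<le> ewt {u i, t}" using u_lt_2[of i] ewt_right[of i] by (simp add: t_def)
  qed
  also have "\<dots> = (\<Sum>e\<in>right_edges. ewt e)"
    unfolding right_edges_def by (simp add: sum.reindex[OF inj])
  also have "\<dots> \<le> (\<Sum>e\<in>kept. ewt e)"
    using ewt_left[of 0] u_ge_1[of 0]
    by (intro sum_mono2) (auto simp: kept_def right_edges_def)
  finally show ?thesis .
qed

text \<open>The light tree uses one edge of length W and k left edges of length below 2.\<close>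
lemma light_tree_weight: "(\<Sum>e\<in>light_tree. ewt e) \<le> W + 2 * real k"
proof -
  have inj: "inj_on (\<lambda>i. {0, u i}) {..<k}"
    by (rule inj_onI) (auto simp: doubleton_eq_iff u_nonzero dest: u_inj)
  have "{u 0, t} \<notin> left_edges"
    using t_gt_2 u_nonzero by (auto simp: left_edges_def doubleton_eq_iff)
  then have "(\<Sum>e\<in>light_tree. ewt e) = ewt {u 0, t} + (\<Sum>e\<in>left_edges. ewt e)"
    by (simp add: light_tree_def left_edges_def)
  also have "(\<Sum>e\<in>left_edges. ewt e) = (\<Sum>i<k. u i)"
    unfolding left_edges_def by (simp add: sum.reindex[OF inj] ewt_left)
  also have "(\<Sum>i<k. u i) \<le> (\<Sum>i<k. 2)"
    using u_lt_2 by (intro sum_mono) force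
  finally show ?thesis
    using ewt_right[OF zero_lt_k] u_zero by (simp add: t_def)
qed

lemma weight_coeff_gadget:
  "real k * (W - 1) / (W + 2 * real k) \<le> weight_coeff vertices edges (sdg edges ranges)"
  unfolding sdg_edges
  using finite_edges edges_pos card_vertices kept_subset kept_connected card_kept
    light_tree_spanning kept_weight light_tree_weight
  by (intro weight_coeff_lower_bound) auto

end

lemma gadget_bound_large_W:
  fixes k W \<eta> :: real
  assumes "\<eta> > 0" and "W > 0" and "k \<ge> 0" and large: "2 * k^2 + k \<le> \<eta> * W"
  shows "k - \<eta> \<le> k * (W - 1) / (W + 2 * k)"
proof -
  have "(k - \<eta>) * (W + 2 * k) = k * (W - 1) - (\<eta> * W - 2 * k^2 - k) - 2 * k * \<eta>"
    by (simp add: algebra_simps power2_eq_square)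
  also have "\<dots> \<le> k * (W - 1)"
    using large mult_nonneg_nonneg[OF assms(3) less_imp_le[OF assms(1)]] by simp
  finally show ?thesis
    using assms(2,3) by (simp add: pos_le_divide_eq)
qed

theorem mainTheorem7:
  fixes n :: nat and \<eta> :: real
  assumes "n \<ge> 3" and "\<eta> > 0"
  shows "\<exists>V E (r :: real \<Rightarrow> real).
           euclid_graph_1d V E \<and> card V = n \<and> (\<forall>x\<in>V. r x > 0) \<and>
           connected_graph V (sdg E r) \<and>
           weight_coeff V E (sdg E r) \<ge> real n - 2 - \<eta>"
proof -
  define k where "k = n - 2"
  define W :: real where "W = (2 * real k^2 + real k) / \<eta> + 2"
  have n_eq: "n = k + 2" and k_pos: "1 \<le> k" using assms(1) by (auto simp: k_def)
  have W_ge: "2 \<le> W" using assms(2) by (simp add: W_def)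
  interpret G: sdg_gadget k W using k_pos W_ge by unfold_locales
  have "2 * real k^2 + real k \<le> \<eta> * W"
    using assms(2) by (simp add: W_def field_simps)
  then have "real k - \<eta> \<le> real k * (W - 1) / (W + 2 * real k)"
    using assms(2) W_ge by (intro gadget_bound_large_W) auto
  then have bound: "real n - 2 - \<eta> \<le> weight_coeff G.vertices G.edges (sdg G.edges G.ranges)"
    using G.weight_coeff_gadget n_eq by simp
  have "card G.vertices = n" using G.card_vertices n_eq by simp
  moreover have "connected_graph G.vertices (sdg G.edges G.ranges)"
    using G.kept_connected G.sdg_edges by simp
  ultimately show ?thesis
    using G.euclid_graph G.ranges_pos bound by blast
qed

end
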